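(* Let $f$ be holomorphic on the open unit disk $\Delta=\{z\in\mathbb C:|z|<1\}$, let $0<r<1$ and $K=\overline\Delta_r=\{z:|z|\le r\}$. For $n\ge 0$ let $N_K(n)$ denote the maximal number (possibly $+\infty$) of zeros on $K$ of functions $f-p$ with $p\in\mathcal P_n$. If $\lim_{n\to\infty}N_K(n)/n=\infty$, then $f$ is a polynomial.
   Context: $\mathcal P_n$ denotes the space of complex polynomials in one variable of degree at most $n$. Zeros are counted with multiplicity. *)

theory Defs
  imports "HOL-Complex_Analysis.Complex_Analysis" "HOL-Computational_Algebra.Polynomial"
    "HOL-Library.Extended_Real"
begin

definition zero_count :: "(complex \<Rightarrow> complex) \<Rightarrow> complex set \<Rightarrow> enat" where
  "zero_count g K =
     (if infinite {z \<in> K. g z = 0} then \<infinity>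
      else enat (\<Sum>z\<in>{z \<in> K. g z = 0}. nat (zorder g z)))"

definition N_K :: "(complex \<Rightarrow> complex) \<Rightarrow> complex set \<Rightarrow> nat \<Rightarrow> enat" where
  "N_K f K n = (SUP p \<in> {p :: complex poly. degree p \<le> n}. zero_count (\<lambda>z. f z - poly p z) K)"

end

theory Submission
  imports Defs
begin

text \<open>
  If \<open>g = f - p\<close>, with \<open>degree p \<le> n\<close>, has \<open>N\<close> zeros in \<open>|z| \<le> r\<close>, then dividing out
  the zeros and multiplying by the Blaschke factors of the circle \<open>|z| = R\<close> gives
  \<open>|g| \<le> q^N max{|g t| : |t| = R}\<close> on \<open>|z| \<le> r\<close>, where \<open>q = 2rR/(R^2 + r^2) < 1\<close>.
  Comparing \<open>p\<close> with the Taylor polynomial of degree \<open>n\<close> of \<open>f\<close> (a polynomial of degree \<open>n\<close>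
  grows at most by the factor \<open>(n + 1)(R/r)^n\<close> from \<open>|z| = r\<close> to \<open>|z| = R\<close>) and applying
  Cauchy's estimate bounds every Taylor coefficient \<open>a k\<close> with \<open>k > n\<close>:
  \<open>|a k| r^k \<le> 4 (n + 1) (R/r)^n q^N (\<Sum>j>n. |a j| R^j)\<close>.

  As \<open>N\<close> may be any multiple of \<open>n\<close>, a fixed \<open>R < 1\<close> gives \<open>|a k|^(1/k) \<longrightarrow> 0\<close>, so \<open>f\<close> is
  entire. Then \<open>R = r A\<close> with \<open>A\<close> arbitrary gives
  \<open>b (n + 1) A^(2n) \<le> 16^(n+1) (\<Sum>j>n. b j A^j)\<close> for \<open>b j = |a j| r^j\<close>. If \<open>f\<close> were not a
  polynomial, Borel's argument would produce radii \<open>A\<close> at which \<open>n + 1\<close> is the central index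
  of \<open>\<Sum>j. b j A^j\<close> and the whole series is at most \<open>e^(n+1) (n + 2)\<close> times its maximal
  term; for large \<open>A\<close> the two bounds are incompatible.
\<close>

section \<open>Taylor coefficients and Cauchy estimates\<close>

definition taylor_coeff :: "(complex \<Rightarrow> complex) \<Rightarrow> nat \<Rightarrow> complex" where
  "taylor_coeff f j = (deriv ^^ j) f 0 / fact j"

definition taylor_poly :: "(complex \<Rightarrow> complex) \<Rightarrow> nat \<Rightarrow> complex poly" where
  "taylor_poly f n = (\<Sum>j\<le>n. monom (taylor_coeff f j) j)"

definition taylor_tail :: "(complex \<Rightarrow> complex) \<Rightarrow> nat \<Rightarrow> real \<Rightarrow> real" where
  "taylor_tail f n R = (\<Sum>j. if n < j then norm (taylor_coeff f j) * R ^ j else 0)"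

lemma taylor_coeff_sums:
  assumes "f holomorphic_on ball 0 \<rho>" "w \<in> ball 0 \<rho>"
  shows "(\<lambda>j. taylor_coeff f j * w ^ j) sums f w"
  using holomorphic_power_series[OF assms] by (simp add: taylor_coeff_def)

lemma summable_norm_taylor_coeff:
  assumes "f holomorphic_on ball 0 \<rho>" "0 \<le> R" "R < \<rho>"
  shows "summable (\<lambda>j. norm (taylor_coeff f j) * R ^ j)"
proof -
  define R' where "R' = (R + \<rho>) / 2"
  have "R < R'" "R' < \<rho>"
    using assms(2,3) by (auto simp: R'_def)
  then have "(of_real R' :: complex) \<in> ball 0 \<rho>"
    using assms(2) by simp
  then have "summable (\<lambda>j. taylor_coeff f j * of_real R' ^ j)"
    using taylor_coeff_sums[OF assms(1)] sums_summable by blast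
  then have "summable (\<lambda>j. norm (taylor_coeff f j * of_real R ^ j))"
    by (rule powser_insidea) (use assms(2) \<open>R < R'\<close> in simp)
  then show ?thesis
    using assms(2) by (simp add: norm_mult norm_power)
qed

lemma taylor_coeff_cong:
  assumes "eventually (\<lambda>z. f z = g z) (nhds 0)"
  shows "taylor_coeff f = taylor_coeff g"
  using higher_deriv_cong_ev[OF assms refl] by (simp add: taylor_coeff_def fun_eq_iff)

lemma higher_deriv_poly: "(deriv ^^ j) (poly p) = poly ((pderiv ^^ j) p)"
proof (induction j)
  case (Suc j)
  have "deriv (poly ((pderiv ^^ j) p)) = poly (pderiv ((pderiv ^^ j) p))"
    by (rule ext, rule DERIV_imp_deriv, rule poly_DERIV)
  then show ?case
    using Suc by simp
qed simp

lemma taylor_coeff_poly: "taylor_coeff (poly p) j = coeff p j"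
  by (simp add: taylor_coeff_def higher_deriv_poly poly_0_coeff_0 coeff_higher_pderiv flip: pochhammer_fact)

lemma taylor_coeff_diff:
  assumes "f holomorphic_on ball 0 \<rho>" "g holomorphic_on ball 0 \<rho>" "0 < \<rho>"
  shows "taylor_coeff (\<lambda>z. f z - g z) j = taylor_coeff f j - taylor_coeff g j"
  using higher_deriv_diff[OF assms(1,2)] assms(3) by (simp add: taylor_coeff_def diff_divide_distrib)

lemma norm_taylor_coeff_le:
  assumes "f holomorphic_on ball 0 \<rho>" "0 < r" "r < \<rho>"
    and "\<And>s. norm s = r \<Longrightarrow> norm (f s) \<le> M"
  shows "norm (taylor_coeff f j) * r ^ j \<le> M"
proof -
  have "norm ((deriv ^^ j) f 0) \<le> fact j * M / r ^ j"
  proof (rule Cauchy_inequality)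
    show "f holomorphic_on ball 0 r"
      using assms(1) by (rule holomorphic_on_subset) (use assms(3) in auto)
    show "continuous_on (cball 0 r) f"
      using holomorphic_on_imp_continuous_on[OF assms(1)]
      by (rule continuous_on_subset) (use assms(3) in auto)
  qed (use assms(2,4) in auto)
  then show ?thesis
    using assms(2) by (simp add: taylor_coeff_def norm_divide field_simps)
qed

lemma poly_taylor_poly: "poly (taylor_poly f n) w = (\<Sum>j\<le>n. taylor_coeff f j * w ^ j)"
  by (simp add: taylor_poly_def poly_sum poly_monom)

lemma degree_taylor_poly_le: "degree (taylor_poly f n) \<le> n"
  unfolding taylor_poly_def
  by (rule degree_sum_le) (auto intro: order_trans[OF degree_monom_le])

lemma summable_taylor_tail:
  assumes "f holomorphic_on ball 0 \<rho>" "0 \<le> R" "R < \<rho>"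
  shows "summable (\<lambda>j. if n < j then norm (taylor_coeff f j) * R ^ j else 0)"
  by (rule summable_comparison_test[OF _ summable_norm_taylor_coeff[OF assms]]) (use assms(2) in auto)

lemma taylor_tail_nonneg:
  assumes "f holomorphic_on ball 0 \<rho>" "0 \<le> R" "R < \<rho>"
  shows "0 \<le> taylor_tail f n R"
  unfolding taylor_tail_def
  by (rule suminf_nonneg[OF summable_taylor_tail[OF assms]]) (use assms(2) in auto)

lemma taylor_tail_le:
  assumes "f holomorphic_on ball 0 \<rho>" "0 \<le> R" "R < \<rho>"
  shows "taylor_tail f n R \<le> (\<Sum>j. norm (taylor_coeff f j) * R ^ j)"
  unfolding taylor_tail_def
  by (rule suminf_le[OF _ summable_taylor_tail[OF assms] summable_norm_taylor_coeff[OF assms]])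
     (use assms(2) in auto)

lemma norm_diff_taylor_poly_le:
  assumes "f holomorphic_on ball 0 \<rho>" "R < \<rho>" "norm w \<le> R"
  shows "norm (f w - poly (taylor_poly f n) w) \<le> taylor_tail f n R"
proof -
  have R: "0 \<le> R"
    using assms(3) norm_ge_zero order_trans by blast
  let ?tail = "\<lambda>j. if n < j then taylor_coeff f j * w ^ j else 0"
  have "(\<lambda>j. if j \<le> n then taylor_coeff f j * w ^ j else 0) sums poly (taylor_poly f n) w"
    using sums_If_finite_set[of "{..n}" "\<lambda>j. taylor_coeff f j * w ^ j"]
    by (simp add: poly_taylor_poly atMost_def)
  with taylor_coeff_sums[OF assms(1)] assms(2,3)
  have "(\<lambda>j. taylor_coeff f j * w ^ j - (if j \<le> n then taylor_coeff f j * w ^ j else 0))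
      sums (f w - poly (taylor_poly f n) w)"
    by (intro sums_diff) auto
  moreover have "(\<lambda>j. taylor_coeff f j * w ^ j - (if j \<le> n then taylor_coeff f j * w ^ j else 0)) = ?tail"
    by auto
  ultimately have "?tail sums (f w - poly (taylor_poly f n) w)"
    by simp
  have le: "norm (?tail j) \<le> (if n < j then norm (taylor_coeff f j) * R ^ j else 0)" for j
    using assms(3) by (auto simp: norm_mult norm_power intro!: mult_left_mono power_mono)
  have "summable (\<lambda>j. norm (?tail j))"
    by (rule summable_comparison_test'[OF summable_taylor_tail[OF assms(1) R assms(2), where n = n], of 0])
       (simp only: real_norm_def abs_norm_cancel le)
  have "norm (f w - poly (taylor_poly f n) w) = norm (\<Sum>j. ?tail j)"
    using \<open>?tail sums _\<close> by (simp add: sums_iff)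
  also have "\<dots> \<le> (\<Sum>j. norm (?tail j))"
    by (rule summable_norm) fact
  also have "\<dots> \<le> taylor_tail f n R"
    unfolding taylor_tail_def
    by (rule suminf_le[OF le \<open>summable _\<close> summable_taylor_tail[OF assms(1) R assms(2)]])
  finally show ?thesis .
qed

lemma norm_coeff_le_circle_bound:
  fixes p :: "complex poly"
  assumes "0 < r" "\<And>s. norm s = r \<Longrightarrow> norm (poly p s) \<le> M"
  shows "norm (coeff p j) * r ^ j \<le> M"
  by (rule norm_taylor_coeff_le[of "poly p" "r + 1", unfolded taylor_coeff_poly])
     (use assms in \<open>auto intro: holomorphic_intros\<close>)

lemma norm_poly_le_circle_bound:
  fixes p :: "complex poly"
  assumes "degree p \<le> n" "0 < r" "r \<le> R" "\<And>s. norm s = r \<Longrightarrow> norm (poly p s) \<le> M"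
    and "norm t \<le> R"
  shows "norm (poly p t) \<le> (real n + 1) * (R / r) ^ n * M"
proof -
  have "0 \<le> M"
    using assms(4)[of "of_real r"] assms(2) by (smt (verit) norm_ge_zero norm_of_real)
  have "poly p t = (\<Sum>i\<le>n. coeff p i * t ^ i)"
    using assms(1) by (simp add: poly_altdef sum.mono_neutral_left coeff_eq_0)
  then have "norm (poly p t) \<le> (\<Sum>i\<le>n. norm (coeff p i) * norm t ^ i)"
    by (metis (no_types, lifting) norm_mult norm_power norm_sum order.refl sum_mono order_trans)
  also have "\<dots> \<le> (\<Sum>i\<le>n. (R / r) ^ n * M)"
  proof (rule sum_mono)
    fix i assume i: "i \<in> {..n}"
    have "norm (coeff p i) * norm t ^ i \<le> norm (coeff p i) * R ^ i"
      by (intro mult_left_mono power_mono assms(5)) auto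
    also have "\<dots> = (norm (coeff p i) * r ^ i) * (R / r) ^ i"
      using assms(2) by (simp add: field_simps power_divide)
    also have "\<dots> \<le> M * (R / r) ^ i"
      using assms(2,3) by (intro mult_right_mono norm_coeff_le_circle_bound assms(4)) auto
    also have "\<dots> \<le> M * (R / r) ^ n"
      using i assms(2,3) \<open>0 \<le> M\<close> by (intro mult_left_mono power_increasing) auto
    finally show "norm (coeff p i) * norm t ^ i \<le> (R / r) ^ n * M"
      by (simp add: mult.commute)
  qed
  also have "\<dots> = (real n + 1) * (R / r) ^ n * M"
    by simp
  finally show ?thesis .
qed

section \<open>Blaschke factors and a Jensen-type bound\<close>

text \<open>The maximum of \<open>\<bar>R (w - z) / (R\<^sup>2 - cnj z w)\<bar>\<close> over \<open>\<bar>z\<bar>, \<bar>w\<bar> \<le> r\<close>.\<close>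
definition blaschke_bound :: "real \<Rightarrow> real \<Rightarrow> real" where
  "blaschke_bound r R = 2 * r * R / (R^2 + r^2)"

lemma blaschke_bound_nonneg: "0 \<le> r \<Longrightarrow> 0 \<le> R \<Longrightarrow> 0 \<le> blaschke_bound r R"
  by (simp add: blaschke_bound_def)

lemma blaschke_bound_less_one:
  assumes "0 \<le> r" "r < R"
  shows "blaschke_bound r R < 1"
proof -
  have "2 * r * R < R^2 + r^2"
    using assms by (smt (verit) power2_diff zero_less_power2)
  moreover have "0 < R^2 + r^2"
    using assms by (simp add: add_pos_nonneg)
  ultimately show ?thesis
    by (simp add: blaschke_bound_def)
qed

lemma blaschke_bound_le:
  assumes "0 \<le> r" "0 < R"
  shows "blaschke_bound r R \<le> 2 * r / R"
proof -
  have "blaschke_bound r R \<le> 2 * r * R / R^2"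
    unfolding blaschke_bound_def using assms by (intro divide_left_mono mult_pos_pos add_pos_nonneg) auto
  then show ?thesis
    using assms by (simp add: power2_eq_square)
qed

lemma blaschke_identity:
  fixes z w :: complex
  shows "norm (of_real (R^2) - cnj z * w)^2 - R^2 * norm (w - z)^2 = (R^2 - norm w ^ 2) * (R^2 - norm z ^ 2)"
proof -
  obtain a b c d where "z = Complex a b" "w = Complex c d"
    by (metis complex.exhaust)
  then show ?thesis
    by (simp only: cmod_power2) (simp add: algebra_simps power2_eq_square)
qed

lemma norm_blaschke_factor_circle:
  fixes z t :: complex
  assumes "norm t = R"
  shows "norm (of_real (R^2) - cnj z * t) = R * norm (t - z)"
proof -
  have "of_real (R^2) = t * cnj t"
    using assms complex_norm_square[of t] by simp
  then have "of_real (R^2) - cnj z * t = t * cnj (t - z)"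
    by (simp add: algebra_simps)
  then show ?thesis
    using assms by (metis complex_mod_cnj norm_mult)
qed

lemma sq_diff_le_blaschke_bound_sq:
  assumes "0 < r" "r < R" "0 \<le> D" "D \<le> R^2 + r^2"
  shows "D^2 - (R^2 - r^2)^2 \<le> (blaschke_bound r R * D)^2"
proof -
  define s d where "s = R^2 + r^2" and "d = R^2 - r^2"
  have s2: "s^2 = d^2 + (2 * r * R)^2"
    unfolding s_def d_def by algebra
  have "0 < s"
    using assms unfolding s_def by (simp add: add_pos_pos)
  have "d^2 * D^2 \<le> d^2 * s^2"
    using assms unfolding s_def by (intro mult_left_mono power_mono) auto
  moreover have "D^2 * s^2 = d^2 * D^2 + (2 * r * R)^2 * D^2"
    unfolding s2 by (simp only: distrib_left mult.commute)
  ultimately have "(D^2 - d^2) * s^2 \<le> (2 * r * R)^2 * D^2"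
    using left_diff_distrib[of "D^2" "d^2" "s^2"] by linarith
  then have "D^2 - d^2 \<le> (2 * r * R)^2 * D^2 / s^2"
    using \<open>0 < s\<close> by (simp add: pos_le_divide_eq)
  also have "\<dots> = (blaschke_bound r R * D)^2"
    unfolding blaschke_bound_def s_def[symmetric]
    by (simp only: power_mult_distrib power_divide times_divide_eq_left)
  finally show ?thesis
    unfolding d_def .
qed

lemma norm_blaschke_factor_disc:
  fixes z w :: complex
  assumes "0 < r" "r < R" "norm z \<le> r" "norm w \<le> r"
  shows "R * norm (w - z) \<le> blaschke_bound r R * norm (of_real (R^2) - cnj z * w)"
proof -
  define D where "D = norm (of_real (R^2) - cnj z * w)"
  have "norm (cnj z * w) \<le> r^2"
    using assms by (simp add: norm_mult power2_eq_square mult_mono')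
  moreover have "norm (of_real (R^2) :: complex) = R^2"
    by (simp only: norm_of_real) simp
  ultimately have "D \<le> R^2 + r^2"
    using norm_triangle_ineq4[of "of_real (R^2)" "cnj z * w"] unfolding D_def by linarith
  have "norm w ^ 2 \<le> r^2" "norm z ^ 2 \<le> r^2" "r^2 \<le> R^2"
    using assms by (auto intro: power_mono)
  then have "(R^2 - r^2) * (R^2 - r^2) \<le> (R^2 - norm w ^ 2) * (R^2 - norm z ^ 2)"
    by (intro mult_mono) auto
  then have "(R^2 - r^2)^2 \<le> (R^2 - norm w ^ 2) * (R^2 - norm z ^ 2)"
    by (simp add: power2_eq_square)
  then have "(R * norm (w - z))^2 \<le> D^2 - (R^2 - r^2)^2"
    using blaschke_identity[of R z w] unfolding D_def by (simp add: power_mult_distrib)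
  also have "\<dots> \<le> (blaschke_bound r R * D)^2"
    using assms \<open>D \<le> R^2 + r^2\<close> unfolding D_def by (intro sq_diff_le_blaschke_bound_sq) auto
  finally have "(R * norm (w - z))^2 \<le> (blaschke_bound r R * D)^2" .
  moreover have "0 \<le> blaschke_bound r R * D"
    using assms unfolding D_def by (simp add: blaschke_bound_nonneg)
  ultimately show ?thesis
    unfolding D_def by (rule power2_le_imp_le)
qed

lemma holomorphic_factor_zero:
  assumes holo: "g holomorphic_on S" and S: "open S" "connected S" and a: "a \<in> S"
    and nz: "\<exists>w\<in>S. g w \<noteq> 0"
  obtains h where "h holomorphic_on S" "\<And>w. w \<in> S \<Longrightarrow> g w = (w - a) ^ nat (zorder g a) * h w"
proof -
  define m where "m = nat (zorder g a)"
  obtain r where r: "r > 0" "cball a r \<subseteq> S" "zor_poly g a holomorphic_on cball a r"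
    "\<And>w. w \<in> cball a r \<Longrightarrow> g w = zor_poly g a w * (w - a) ^ m"
    using zorder_exist_zero[OF holo S a nz] unfolding m_def by blast
  define h where "h = (\<lambda>w. if w = a then zor_poly g a a else g w / (w - a) ^ m)"
  have "h holomorphic_on (S - {a})"
  proof (rule holomorphic_transform[where f = "\<lambda>w. g w / (w - a) ^ m"])
    show "(\<lambda>w. g w / (w - a) ^ m) holomorphic_on S - {a}"
      by (intro holomorphic_intros holomorphic_on_subset[OF holo]) auto
  qed (auto simp: h_def)
  moreover have "h holomorphic_on ball a r"
  proof (rule holomorphic_transform[where f = "zor_poly g a"])
    show "zor_poly g a holomorphic_on ball a r"
      using r(3) by (rule holomorphic_on_subset) auto
  qed (use r(4) in \<open>auto simp: h_def\<close>)
  ultimately have "h holomorphic_on (S - {a}) \<union> ball a r"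
    by (rule holomorphic_on_Un) (use S in auto)
  then have "h holomorphic_on S"
    by (rule holomorphic_on_subset) (use r(1) in auto)
  moreover have "g w = (w - a) ^ m * h w" if "w \<in> S" for w
    using r(4)[of a] r(1) by (cases "w = a") (auto simp: h_def)
  ultimately show ?thesis
    using that unfolding m_def by blast
qed

lemma zorder_times_nonzero_factor:
  assumes holo: "g holomorphic_on S" and S: "open S" "connected S" and a: "a \<in> S"
    and nz: "\<exists>w\<in>S. g w \<noteq> 0" and h: "h holomorphic_on S"
    and \<omega>: "\<omega> analytic_on {a}" "\<omega> a \<noteq> 0" and g: "\<And>w. w \<in> S \<Longrightarrow> g w = \<omega> w * h w"
  shows "zorder h a = zorder g a"
proof -
  have ev: "eventually (\<lambda>w. g w = \<omega> w * h w) (at a)"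
    using eventually_at_in_open'[OF S(1) a] by eventually_elim (use g in auto)
  obtain b where b: "b \<in> S" "g b \<noteq> 0"
    using nz by auto
  have nonzero: "eventually (\<lambda>w. \<omega> w * h w \<noteq> 0) (at a)"
    using non_zero_neighbour_alt[OF holo S a b] ev by eventually_elim auto
  have "zorder (\<lambda>w. \<omega> w * h w) a = zorder \<omega> a + zorder h a"
  proof (rule zorder_times_analytic)
    show "h analytic_on {a}"
      using h S(1) a analytic_at by blast
  qed (rule \<omega>(1) nonzero)+
  moreover have "zorder \<omega> a = 0"
    using \<omega> by (rule zorder_eq_0I)
  ultimately show ?thesis
    using zorder_cong[OF ev refl] by simp
qed

lemma holomorphic_factor_zeros:
  assumes holo: "g holomorphic_on S" and S: "open S" "connected S"
    and nz: "\<exists>w\<in>S. g w \<noteq> 0" and "finite Z" "Z \<subseteq> S"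
  obtains h where "h holomorphic_on S"
    "\<And>w. w \<in> S \<Longrightarrow> g w = (\<Prod>z\<in>Z. (w - z) ^ nat (zorder g z)) * h w"
proof -
  have "\<exists>h. h holomorphic_on S \<and> (\<forall>w\<in>S. g w = (\<Prod>z\<in>Z. (w - z) ^ nat (zorder g z)) * h w)"
    using assms(5,6)
  proof (induction Z rule: finite_induct)
    case empty
    then show ?case
      using holo by auto
  next
    case (insert a Z)
    define \<omega> where "\<omega> = (\<lambda>w. \<Prod>z\<in>Z. (w - z) ^ nat (zorder g z))"
    obtain h where h: "h holomorphic_on S" "\<And>w. w \<in> S \<Longrightarrow> g w = \<omega> w * h w"
      using insert.IH insert.prems unfolding \<omega>_def by auto
    have a: "a \<in> S"
      using insert.prems by auto
    have "\<exists>w\<in>S. h w \<noteq> 0"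
      using nz h(2) by force
    then obtain h' where h': "h' holomorphic_on S"
      "\<And>w. w \<in> S \<Longrightarrow> h w = (w - a) ^ nat (zorder h a) * h' w"
      using holomorphic_factor_zero[OF h(1) S a] by blast
    have "zorder h a = zorder g a"
      using insert.hyps
      by (intro zorder_times_nonzero_factor[OF holo S a nz h(1) _ _ h(2)])
         (auto simp: \<omega>_def intro!: analytic_intros)
    then have "\<forall>w\<in>S. g w = (\<Prod>z\<in>insert a Z. (w - z) ^ nat (zorder g z)) * h' w"
      using h(2) h'(2) insert.hyps by (simp add: \<omega>_def algebra_simps)
    then show ?case
      using h'(1) by blast
  qed
  then show ?thesis
    using that by blast
qed

lemma norm_prod_blaschke_factors_circle:
  assumes "norm t = R" "0 < R"
  shows "norm (\<Prod>z\<in>Z. ((of_real (R^2) - cnj z * t) / of_real R) ^ m z) = norm (\<Prod>z\<in>Z. (t - z) ^ m z)"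
proof -
  have "norm ((of_real (R^2) - cnj z * t) / of_real R) = norm (t - z)" for z
    using assms by (simp only: norm_divide norm_of_real norm_blaschke_factor_circle[OF assms(1)]) simp
  then show ?thesis
    by (simp add: prod_norm[symmetric] norm_power)
qed

lemma norm_prod_le_blaschke_factors:
  assumes "Z \<subseteq> cball 0 r" "0 < r" "r < R" "norm w \<le> r"
  shows "norm (\<Prod>z\<in>Z. (w - z) ^ m z)
    \<le> blaschke_bound r R ^ (\<Sum>z\<in>Z. m z) * norm (\<Prod>z\<in>Z. ((of_real (R^2) - cnj z * w) / of_real R) ^ m z)"
proof -
  have "norm (w - z) \<le> blaschke_bound r R * norm ((of_real (R^2) - cnj z * w) / of_real R)"
    if "z \<in> Z" for z
    using norm_blaschke_factor_disc[of r R z w] assms that by (auto simp: norm_divide field_simps)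
  then have "(\<Prod>z\<in>Z. norm (w - z) ^ m z)
      \<le> (\<Prod>z\<in>Z. (blaschke_bound r R * norm ((of_real (R^2) - cnj z * w) / of_real R)) ^ m z)"
    by (intro prod_mono conjI power_mono) auto
  then show ?thesis
    by (simp add: prod_norm[symmetric] norm_power power_mult_distrib prod.distrib power_sum)
qed

lemma norm_le_blaschke_bound_pow_zorder_sum:
  fixes g :: "complex \<Rightarrow> complex"
  assumes holo: "g holomorphic_on ball 0 \<rho>" and rR: "0 < r" "r < R" "R < \<rho>"
    and fin: "finite {z \<in> cball 0 r. g z = 0}" and nz: "\<exists>w\<in>ball 0 \<rho>. g w \<noteq> 0"
    and M: "\<And>t. norm t = R \<Longrightarrow> norm (g t) \<le> M" and w: "norm w \<le> r"
  shows "norm (g w) \<le> blaschke_bound r R ^ (\<Sum>z\<in>{z \<in> cball 0 r. g z = 0}. nat (zorder g z)) * M"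
proof -
  define Z where "Z = {z \<in> cball 0 r. g z = 0}"
  define m where "m = (\<lambda>z. nat (zorder g z))"
  define B where "B = (\<lambda>w. \<Prod>z\<in>Z. ((of_real (R^2) - cnj z * w) / of_real R) ^ m z)"
  have "Z \<subseteq> ball 0 \<rho>"
    using rR unfolding Z_def by auto
  then obtain h where h: "h holomorphic_on ball 0 \<rho>"
    "\<And>w. w \<in> ball 0 \<rho> \<Longrightarrow> g w = (\<Prod>z\<in>Z. (w - z) ^ m z) * h w"
    using holomorphic_factor_zeros[OF holo open_ball connected_ball nz] fin
    unfolding Z_def m_def by blast
  have hB: "(\<lambda>w. h w * B w) holomorphic_on ball 0 \<rho>"
    unfolding B_def using rR by (intro holomorphic_intros h(1)) auto
  have circle: "norm (h t * B t) \<le> M" if "norm t = R" for t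
  proof -
    have "norm (h t * B t) = norm (g t)"
      using h(2)[of t] that rR norm_prod_blaschke_factors_circle[OF that, where Z = Z and m = m]
      by (simp add: B_def norm_mult)
    then show ?thesis
      using M[OF that] by simp
  qed
  have hB_le: "norm (h w * B w) \<le> M"
  proof (rule maximum_modulus_frontier[where f = "\<lambda>w. h w * B w" and S = "cball 0 R"])
    show "(\<lambda>w. h w * B w) holomorphic_on interior (cball 0 R)"
      using hB by (rule holomorphic_on_subset) (use rR in auto)
    show "continuous_on (closure (cball 0 R)) (\<lambda>w. h w * B w)"
      using holomorphic_on_imp_continuous_on[OF hB] by (rule continuous_on_subset) (use rR in auto)
  qed (use circle w rR in auto)
  have "norm (g w) = norm (\<Prod>z\<in>Z. (w - z) ^ m z) * norm (h w)"
    using h(2)[of w] w rR by (simp add: norm_mult)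
  also have "\<dots> \<le> blaschke_bound r R ^ (\<Sum>z\<in>Z. m z) * norm (B w) * norm (h w)"
    unfolding B_def by (intro mult_right_mono norm_prod_le_blaschke_factors) (use rR w in \<open>auto simp: Z_def\<close>)
  also have "\<dots> = blaschke_bound r R ^ (\<Sum>z\<in>Z. m z) * norm (h w * B w)"
    by (simp add: norm_mult)
  also have "\<dots> \<le> blaschke_bound r R ^ (\<Sum>z\<in>Z. m z) * M"
    using hB_le rR by (intro mult_left_mono) (auto simp: blaschke_bound_nonneg)
  finally show ?thesis
    unfolding Z_def m_def .
qed

lemma norm_le_blaschke_bound_pow_zero_count:
  fixes g :: "complex \<Rightarrow> complex"
  assumes holo: "g holomorphic_on ball 0 \<rho>" and rR: "0 < r" "r < R" "R < \<rho>"
    and M: "\<And>t. norm t = R \<Longrightarrow> norm (g t) \<le> M"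
    and N: "enat N \<le> zero_count g (cball 0 r)" and w: "norm w \<le> r"
  shows "norm (g w) \<le> blaschke_bound r R ^ N * M"
proof -
  have "0 \<le> M"
    using M[of "of_real R"] rR by (smt (verit) norm_ge_zero norm_of_real)
  show ?thesis
  proof (cases "\<exists>z\<in>ball 0 \<rho>. g z \<noteq> 0")
    case False
    then show ?thesis
      using w rR \<open>0 \<le> M\<close> by (simp add: blaschke_bound_nonneg)
  next
    case True
    define Z where "Z = {z \<in> cball 0 r. g z = 0}"
    have "finite Z"
    proof (cases "g constant_on ball 0 \<rho>")
      case True
      then have "Z = {}"
        using \<open>\<exists>z\<in>ball 0 \<rho>. g z \<noteq> 0\<close> rR by (auto simp: Z_def constant_on_def)
      then show ?thesis
        by simp
    next
      case False
      then show ?thesis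
        unfolding Z_def using rR
        by (intro holomorphic_compact_finite_zeros[OF holo open_ball connected_ball compact_cball]) auto
    qed
    then have "N \<le> (\<Sum>z\<in>Z. nat (zorder g z))"
      using N by (simp add: zero_count_def Z_def)
    then have "blaschke_bound r R ^ (\<Sum>z\<in>Z. nat (zorder g z)) \<le> blaschke_bound r R ^ N"
      using rR by (intro power_decreasing less_imp_le[OF blaschke_bound_less_one] blaschke_bound_nonneg) auto
    moreover have "norm (g w) \<le> blaschke_bound r R ^ (\<Sum>z\<in>Z. nat (zorder g z)) * M"
      unfolding Z_def using \<open>finite Z\<close>[unfolded Z_def] True M w
      by (intro norm_le_blaschke_bound_pow_zorder_sum[OF holo rR])
    ultimately show ?thesis
      using \<open>0 \<le> M\<close> by (meson mult_right_mono order_trans)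
  qed
qed

section \<open>Taylor coefficients of functions close to polynomials\<close>

lemma norm_diff_poly_le_larger_circle:
  fixes F :: "complex \<Rightarrow> complex" and p :: "complex poly"
  assumes holo: "F holomorphic_on ball 0 \<rho>" and rR: "0 < r" "r < R" "R < \<rho>" and deg: "degree p \<le> n"
    and E: "\<And>s. norm s = r \<Longrightarrow> norm (F s - poly p s) \<le> E" and t: "norm t = R"
  shows "norm (F t - poly p t) \<le> taylor_tail F n R + (real n + 1) * (R / r) ^ n * (taylor_tail F n R + E)"
proof -
  define T where "T = taylor_tail F n R"
  define P where "P = p - taylor_poly F n"
  have tail: "norm (F w - poly (taylor_poly F n) w) \<le> T" if "norm w \<le> R" for w
    unfolding T_def using that rR by (intro norm_diff_taylor_poly_le[OF holo]) auto
  have "norm (poly P s) \<le> T + E" if "norm s = r" for s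
  proof -
    have "poly P s = (F s - poly (taylor_poly F n) s) - (F s - poly p s)"
      unfolding P_def by simp
    then show ?thesis
      using tail[of s] E[OF that] that rR by (smt (verit) norm_triangle_ineq4)
  qed
  moreover have "degree P \<le> n"
    unfolding P_def using deg degree_taylor_poly_le degree_diff_le by blast
  ultimately have "norm (poly P t) \<le> (real n + 1) * (R / r) ^ n * (T + E)"
    using rR t by (intro norm_poly_le_circle_bound) auto
  moreover have "F t - poly p t = (F t - poly (taylor_poly F n) t) - poly P t"
    unfolding P_def by simp
  ultimately show ?thesis
    using tail[of t] t unfolding T_def[symmetric] by (smt (verit) norm_triangle_ineq4)
qed

lemma norm_taylor_coeff_le_taylor_tail:
  fixes F :: "complex \<Rightarrow> complex" and p :: "complex poly"
  assumes holo: "F holomorphic_on ball 0 \<rho>" and rR: "0 < r" "r < R" "R < \<rho>"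
    and deg: "degree p \<le> n" and N: "enat N \<le> zero_count (\<lambda>z. F z - poly p z) (cball 0 r)"
    and small: "(real n + 1) * (R / r) ^ n * blaschke_bound r R ^ N \<le> 1 / 2"
    and k: "n < k"
  shows "norm (taylor_coeff F k) * r ^ k
    \<le> 4 * ((real n + 1) * (R / r) ^ n * blaschke_bound r R ^ N) * taylor_tail F n R"
proof -
  define g where "g = (\<lambda>z. F z - poly p z)"
  define x where "x = blaschke_bound r R ^ N"
  define Y where "Y = (real n + 1) * (R / r) ^ n"
  define T where "T = taylor_tail F n R"
  have g: "g holomorphic_on ball 0 \<rho>"
    unfolding g_def by (intro holomorphic_intros holo)
  have "0 \<le> x"
    unfolding x_def using rR by (simp add: blaschke_bound_nonneg)
  have "1 \<le> (R / r) ^ n"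
    using rR by (intro one_le_power) simp
  then have "1 \<le> Y"
    unfolding Y_def using mult_mono[of 1 "real n + 1" 1 "(R / r) ^ n"] by simp
  have "0 \<le> T"
    unfolding T_def using rR by (intro taylor_tail_nonneg[OF holo]) auto
  obtain w0 where w0: "norm w0 \<le> r" "\<And>w. norm w \<le> r \<Longrightarrow> norm (g w) \<le> norm (g w0)"
  proof -
    have "continuous_on (cball 0 r) (\<lambda>w. norm (g w))"
      by (intro continuous_intros holomorphic_on_imp_continuous_on[OF holomorphic_on_subset[OF g]])
         (use rR in auto)
    then show ?thesis
      using continuous_attains_sup[of "cball 0 r" "\<lambda>w. norm (g w)"] that rR by auto
  qed
  define E where "E = norm (g w0)"
  have "norm (g t) \<le> T + Y * (T + E)" if "norm t = R" for t
    unfolding g_def T_def Y_def E_def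
    by (rule norm_diff_poly_le_larger_circle[OF holo rR deg _ that]) (use w0(2) in \<open>auto simp: g_def\<close>)
  then have "E \<le> x * (T + Y * (T + E))"
    unfolding E_def x_def using N rR w0(1)
    by (intro norm_le_blaschke_bound_pow_zero_count[OF g]) (auto simp: g_def)
  also have "\<dots> \<le> x * T + x * Y * T + E / 2"
    using small mult_right_mono[of "x * Y" "1/2" E] unfolding x_def Y_def E_def
    by (simp add: algebra_simps)
  also have "x * T \<le> x * Y * T"
    using mult_left_mono[OF mult_right_mono[OF \<open>1 \<le> Y\<close> \<open>0 \<le> T\<close>] \<open>0 \<le> x\<close>]
    by (simp add: mult.assoc)
  finally have "E \<le> 2 * (T * (Y * x)) + E / 2"
    by simp
  then have E: "E \<le> 4 * (Y * x * T)"
    using mult.commute[of T "Y * x"] by linarith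
  have "taylor_coeff g k = taylor_coeff F k"
    using rR k deg unfolding g_def
    by (simp add: taylor_coeff_diff[OF holo] taylor_coeff_poly coeff_eq_0 holomorphic_intros)
  moreover have "norm (taylor_coeff g k) * r ^ k \<le> E"
    unfolding E_def using rR w0(2) by (intro norm_taylor_coeff_le[OF g]) auto
  ultimately show ?thesis
    using E unfolding Y_def x_def T_def by (simp add: mult.assoc)
qed

definition superlinear_zeros :: "(complex \<Rightarrow> complex) \<Rightarrow> complex set \<Rightarrow> bool" where
  "superlinear_zeros f K \<longleftrightarrow>
     (\<forall>L::nat. \<forall>\<^sub>F n in sequentially. \<exists>p. degree p \<le> n \<and> enat (L * n) \<le> zero_count (\<lambda>z. f z - poly p z) K)"

lemma superlinear_zeros_if_tendsto_PInfty:
  assumes "((\<lambda>n. ereal_of_enat (N_K f K n) / ereal (real n)) \<longlongrightarrow> \<infinity>) sequentially"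
  shows "superlinear_zeros f K"
  unfolding superlinear_zeros_def
proof
  fix L :: nat
  have "\<forall>\<^sub>F n in sequentially. ereal (real L) < ereal_of_enat (N_K f K n) / ereal (real n) \<and> 0 < n"
    using assms eventually_gt_at_top[of 0] unfolding tendsto_PInfty by (auto intro: eventually_conj)
  then show "\<forall>\<^sub>F n in sequentially. \<exists>p. degree p \<le> n \<and> enat (L * n) \<le> zero_count (\<lambda>z. f z - poly p z) K"
  proof eventually_elim
    case (elim n)
    then have lt: "ereal (real L) < ereal_of_enat (N_K f K n) / ereal (real n)" and "0 < n"
      by auto
    have "enat (L * n) < N_K f K n"
    proof (cases "N_K f K n")
      case (enat m)
      then have "real L < real m / real n"
        using lt \<open>0 < n\<close> by simp
      then have "real L * real n < real m"
        using \<open>0 < n\<close> by (simp add: field_simps)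
      then show ?thesis
        using enat by (simp flip: of_nat_mult)
    qed simp
    then show ?case
      unfolding N_K_def by (auto simp: less_SUP_iff intro: less_imp_le)
  qed
qed

lemma Suc_times_power_le:
  assumes "0 \<le> x"
  shows "(real n + 1) * x ^ n \<le> (2 * x) ^ n"
proof -
  have "n + 1 \<le> (2::nat) ^ n"
    using less_exp[of n] by (simp add: Suc_le_eq)
  then have "real (n + 1) \<le> real ((2::nat) ^ n)"
    by (simp only: of_nat_le_iff)
  then have "real n + 1 \<le> 2 ^ n"
    by simp
  then show ?thesis
    using assms by (simp add: power_mult_distrib mult_right_mono)
qed

lemma eventually_norm_taylor_coeff_le:
  assumes holo: "f holomorphic_on ball 0 1" and r: "0 < r" "r < 1"
    and zeros: "superlinear_zeros f (cball 0 r)" and \<theta>: "0 < \<theta>" "\<theta> \<le> 1 / 8"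
  obtains C where "0 \<le> C"
    "\<forall>\<^sub>F n in sequentially. norm (taylor_coeff f (Suc n)) * r ^ Suc n \<le> C * (2 * \<theta>) ^ n"
proof -
  define R where "R = (1 + r) / 2"
  define q where "q = blaschke_bound r R"
  define S where "S = (\<Sum>j. norm (taylor_coeff f j) * R ^ j)"
  have rR: "0 < r" "r < R" "R < 1"
    using r unfolding R_def by auto
  have "0 \<le> q" "q < 1"
    unfolding q_def using rR by (auto intro: blaschke_bound_nonneg blaschke_bound_less_one)
  moreover have "0 < \<theta> / (R / r)"
    using \<theta> rR by simp
  ultimately obtain L where "q ^ L < \<theta> / (R / r)"
    using real_arch_pow_inv by blast
  then have qL: "R / r * q ^ L \<le> \<theta>"
    using rR by (simp add: field_simps)
  have "\<forall>\<^sub>F n in sequentially. norm (taylor_coeff f (Suc n)) * r ^ Suc n \<le> 4 * S * (2 * \<theta>) ^ n"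
    using eventually_conj[OF spec[OF zeros[unfolded superlinear_zeros_def], of L] eventually_gt_at_top[of 0]]
  proof eventually_elim
    case (elim n)
    then obtain p where p: "degree p \<le> n" "enat (L * n) \<le> zero_count (\<lambda>z. f z - poly p z) (cball 0 r)"
      by blast
    have "(R / r) ^ n * q ^ (L * n) = (R / r * q ^ L) ^ n"
      by (simp only: power_mult power_mult_distrib)
    also have "\<dots> \<le> \<theta> ^ n"
      using qL rR \<open>0 \<le> q\<close> by (intro power_mono) auto
    finally have "(real n + 1) * ((R / r) ^ n * q ^ (L * n)) \<le> (real n + 1) * \<theta> ^ n"
      by (intro mult_left_mono) auto
    also have "\<dots> \<le> (2 * \<theta>) ^ n"
      using \<theta> by (intro Suc_times_power_le) auto
    finally have X: "(real n + 1) * (R / r) ^ n * q ^ (L * n) \<le> (2 * \<theta>) ^ n"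
      by (simp add: mult.assoc)
    have "(2 * \<theta>) ^ n \<le> (2 * \<theta>) ^ 1"
      using \<theta> elim by (intro power_decreasing) auto
    then have small: "(real n + 1) * (R / r) ^ n * q ^ (L * n) \<le> 1 / 2"
      using X \<theta> by simp
    have "norm (taylor_coeff f (Suc n)) * r ^ Suc n
        \<le> 4 * ((real n + 1) * (R / r) ^ n * q ^ (L * n)) * taylor_tail f n R"
      unfolding q_def using small
      by (intro norm_taylor_coeff_le_taylor_tail[OF holo rR p]) (auto simp: q_def)
    also have "\<dots> \<le> 4 * (2 * \<theta>) ^ n * S"
    proof (rule mult_mono)
      show "4 * ((real n + 1) * (R / r) ^ n * q ^ (L * n)) \<le> 4 * (2 * \<theta>) ^ n"
        using X by simp
      show "taylor_tail f n R \<le> S"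
        unfolding S_def using rR by (intro taylor_tail_le[OF holo]) auto
    qed (use rR \<theta> taylor_tail_nonneg[OF holo, of R n] in auto)
    finally show ?case
      by (simp add: mult_ac)
  qed
  moreover have "0 \<le> 4 * S"
    unfolding S_def using summable_norm_taylor_coeff[OF holo] rR by (simp add: suminf_nonneg)
  ultimately show ?thesis
    using that by blast
qed

lemma summable_taylor_coeff_if_superlinear_zeros:
  assumes holo: "f holomorphic_on ball 0 1" and r: "0 < r" "r < 1"
    and zeros: "superlinear_zeros f (cball 0 r)" and B: "0 < B"
  shows "summable (\<lambda>j. norm (taylor_coeff f j) * B ^ j)"
proof -
  define \<theta> where "\<theta> = min (1 / 8) (r / (8 * B))"
  have \<theta>: "0 < \<theta>" "\<theta> \<le> 1 / 8" "2 * \<theta> * (B / r) \<le> 1 / 4"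
    using r B unfolding \<theta>_def by (auto simp: field_simps min_def)
  obtain C where C: "0 \<le> C" "\<forall>\<^sub>F n in sequentially. norm (taylor_coeff f (Suc n)) * r ^ Suc n \<le> C * (2 * \<theta>) ^ n"
    using eventually_norm_taylor_coeff_le[OF holo r zeros \<theta>(1,2)] by blast
  have ev: "\<forall>\<^sub>F n in sequentially. norm (norm (taylor_coeff f (Suc n)) * B ^ Suc n) \<le> C * (B / r) * (1 / 4) ^ n"
    using C(2)
  proof eventually_elim
    case (elim n)
    have "norm (taylor_coeff f (Suc n)) * B ^ Suc n = norm (taylor_coeff f (Suc n)) * r ^ Suc n * (B / r) ^ Suc n"
      using r by (simp add: power_divide)
    also have "\<dots> \<le> C * (2 * \<theta>) ^ n * (B / r) ^ Suc n"
      using elim r B by (intro mult_right_mono) auto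
    also have "\<dots> = C * (B / r) * (2 * \<theta> * (B / r)) ^ n"
      by (simp only: power_Suc power_mult_distrib mult_ac)
    also have "\<dots> \<le> C * (B / r) * (1 / 4) ^ n"
      using \<theta> r B C(1) by (intro mult_left_mono power_mono) auto
    finally show ?case
      using B by simp
  qed
  have "summable (\<lambda>n. C * (B / r) * (1 / 4) ^ n)"
    by (intro summable_mult summable_geometric) auto
  with ev have "summable (\<lambda>n. norm (taylor_coeff f (Suc n)) * B ^ Suc n)"
    by (rule summable_comparison_test_ev)
  then show ?thesis
    by (subst summable_Suc_iff[symmetric])
qed

section \<open>Maximal term and central index\<close>

lemma exp_times_Suc_le: "exp (real k) * (real k + 1) \<le> 6 ^ k"
proof -
  have "exp (real k) = exp 1 ^ k"
    using exp_of_nat_mult[of k 1] by simp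
  also have "\<dots> \<le> 3 ^ k"
    using exp_le by (intro power_mono) auto
  finally have "exp (real k) * (real k + 1) \<le> 3 ^ k * (2 ^ k)"
    using Suc_times_power_le[of 1 k] by (intro mult_mono) auto
  then show ?thesis
    by (simp add: power_mult_distrib[symmetric])
qed

lemma exp_radius_step:
  fixes A :: real and v v1 :: nat
  assumes "0 < A" "0 < v" "2 * v \<le> v1"
  shows "A * (1 + 1 / v) * exp (2 / v1) \<le> A * exp (2 / v)"
proof -
  have "2 / real v1 \<le> 1 / real v"
    using assms(2,3) by (simp add: field_simps)
  have "A * (1 + 1 / v) * exp (2 / v1) \<le> A * exp (1 / v) * exp (2 / v1)"
    using assms(1) by (intro mult_right_mono mult_left_mono) (auto simp: add.commute)
  also have "\<dots> \<le> A * exp (2 / v)"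
    using assms(1) \<open>2 / real v1 \<le> 1 / real v\<close> by (simp add: mult.assoc flip: exp_add)
  finally show ?thesis .
qed

locale maximal_term =
  fixes b :: "nat \<Rightarrow> real"
  assumes nonneg: "0 \<le> b j"
    and summable: "0 < A \<Longrightarrow> summable (\<lambda>j. b j * A ^ j)"
    and frequently_pos: "\<exists>j\<ge>m. 0 < b j"
begin

definition central_index :: "real \<Rightarrow> nat" where
  "central_index A = (LEAST j. \<forall>i. b i * A ^ i \<le> b j * A ^ j)"

lemma ex_maximal_term:
  assumes "0 < A"
  shows "\<exists>j. \<forall>i. b i * A ^ i \<le> b j * A ^ j"
proof -
  obtain j0 where j0: "0 < b j0"
    using frequently_pos by blast
  then have "0 < b j0 * A ^ j0"
    using assms by simp
  moreover have "(\<lambda>i. b i * A ^ i) \<longlonglongrightarrow> 0"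
    using summable[OF assms] by (rule summable_LIMSEQ_zero)
  ultimately have "\<forall>\<^sub>F i in sequentially. b i * A ^ i < b j0 * A ^ j0"
    by (intro order_tendstoD(2))
  then obtain M where M: "\<And>i. M \<le> i \<Longrightarrow> b i * A ^ i < b j0 * A ^ j0"
    unfolding eventually_sequentially by blast
  define I where "I = {..max M (Suc j0)}"
  define m where "m = Max ((\<lambda>i. b i * A ^ i) ` I)"
  have "m \<in> (\<lambda>i. b i * A ^ i) ` I"
    unfolding m_def I_def by (intro Max_in) auto
  then obtain j where "j \<in> I" "b j * A ^ j = m"
    by blast
  have j: "b i * A ^ i \<le> b j * A ^ j" if "i \<in> I" for i
    unfolding \<open>b j * A ^ j = m\<close> m_def using that by (intro Max_ge) (auto simp: I_def)
  have "b i * A ^ i \<le> b j * A ^ j" for i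
  proof (cases "i \<in> I")
    case False
    then have "b i * A ^ i < b j0 * A ^ j0"
      by (intro M) (auto simp: I_def)
    also have "\<dots> \<le> b j * A ^ j"
      by (rule j) (auto simp: I_def)
    finally show ?thesis
      by simp
  qed (rule j)
  then show ?thesis
    by blast
qed

lemma central_index_max: "0 < A \<Longrightarrow> b i * A ^ i \<le> b (central_index A) * A ^ central_index A"
  unfolding central_index_def by (rule LeastI_ex[OF ex_maximal_term, THEN spec])

lemma central_index_less:
  assumes "0 < A" "i < central_index A"
  shows "b i * A ^ i < b (central_index A) * A ^ central_index A"
proof -
  obtain i' where "b i * A ^ i < b i' * A ^ i'"
    using not_less_Least[OF assms(2)[unfolded central_index_def]] by (auto simp: not_le)
  then show ?thesis
    using central_index_max[OF assms(1), of i'] by simp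
qed

lemma central_index_pos:
  assumes "0 < A"
  shows "0 < b (central_index A)"
proof -
  obtain j where "0 < b j"
    using frequently_pos by blast
  then have "0 < b j * A ^ j"
    using assms by simp
  also have "\<dots> \<le> b (central_index A) * A ^ central_index A"
    using assms by (rule central_index_max)
  finally show ?thesis
    using assms by (simp add: zero_less_mult_iff)
qed

lemma central_index_mono:
  assumes A: "0 < A" and AB: "A \<le> B"
  shows "central_index A \<le> central_index B"
proof (rule ccontr)
  define j k where "j = central_index B" and "k = central_index A"
  assume "\<not> central_index A \<le> central_index B"
  then have "j < k"
    unfolding j_def k_def by simp
  have scale: "b i * B ^ i = b i * A ^ i * (B / A) ^ i" for i
    using A by (simp add: power_divide)
  have "1 \<le> B / A"
    using A AB by simp
  have "b j * B ^ j < b k * A ^ k * (B / A) ^ j"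
    unfolding scale using central_index_less[OF A \<open>j < k\<close>[unfolded k_def]] \<open>1 \<le> B / A\<close>
    by (intro mult_strict_right_mono) (auto simp: k_def)
  also have "\<dots> \<le> b k * A ^ k * (B / A) ^ k"
    using \<open>1 \<le> B / A\<close> \<open>j < k\<close> A nonneg by (intro mult_left_mono power_increasing) auto
  also have "\<dots> \<le> b j * B ^ j"
    unfolding scale[symmetric] j_def using A AB by (intro central_index_max) auto
  finally show False
    by simp
qed

lemma central_index_unbounded:
  obtains A where "A0 \<le> A" "1 \<le> A" "K \<le> central_index A"
proof -
  obtain j where j: "K \<le> j" "0 < b j"
    using frequently_pos by blast
  define A where "A = 1 + \<bar>A0\<bar> + (\<Sum>i<K. b i) / b j"
  have "0 \<le> (\<Sum>i<K. b i) / b j"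
    using nonneg j by (simp add: sum_nonneg)
  then have A: "1 \<le> A" "A0 \<le> A"
    unfolding A_def by auto
  have "K \<le> central_index A"
  proof (rule ccontr)
    define i where "i = central_index A"
    assume "\<not> K \<le> central_index A"
    then have "i < K" "i < j"
      using j unfolding i_def by auto
    have "b i \<le> (\<Sum>i<K. b i)"
      using \<open>i < K\<close> nonneg by (intro member_le_sum) auto
    also have "\<dots> \<le> b j * (A - 1)"
      using j(2) \<open>0 \<le> (\<Sum>i<K. b i) / b j\<close> unfolding A_def by (simp add: field_simps)
    finally have bi: "b i \<le> b j * (A - 1)" .
    have "b i * A ^ i \<le> b i * A ^ (j - 1)"
      using \<open>i < j\<close> A nonneg by (intro mult_left_mono power_increasing) auto
    also have "\<dots> \<le> b j * (A - 1) * A ^ (j - 1)"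
      using bi A by (intro mult_right_mono) auto
    also have "\<dots> < b j * A * A ^ (j - 1)"
      using j(2) A by (intro mult_strict_right_mono) auto
    also have "\<dots> = b j * A ^ j"
      using \<open>i < j\<close> by (simp add: mult.assoc power_eq_if)
    finally have "b i * A ^ i < b j * A ^ j" .
    moreover have "b j * A ^ j \<le> b i * A ^ i"
      unfolding i_def using A by (intro central_index_max) auto
    ultimately show False
      by simp
  qed
  then show ?thesis
    using A that by blast
qed

text \<open>Borel's argument: if the central index \<open>v\<close> jumped above \<open>v^2\<close> at every step
  \<open>A \<mapsto> A (1 + 1/v)\<close>, the radii would stay below \<open>A exp (2/v)\<close> while the indices explode.\<close>

lemma central_index_regular:
  assumes "0 < A" "2 \<le> central_index A"
  obtains A' where "A \<le> A'" "central_index A \<le> central_index A'"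
    "central_index (A' * (1 + 1 / central_index A')) \<le> (central_index A')\<^sup>2"
proof -
  define B where "B = A * exp (2 / central_index A)"
  have "\<exists>A'\<ge>A. central_index A \<le> central_index A'
      \<and> central_index (A' * (1 + 1 / central_index A')) \<le> (central_index A')\<^sup>2"
    if "central_index B - central_index A = d" "0 < A" "2 \<le> central_index A"
      "A * exp (2 / central_index A) \<le> B" for d A
    using that
  proof (induction d arbitrary: A rule: less_induct)
    case (less d A)
    define v where "v = central_index A"
    define A1 where "A1 = A * (1 + 1 / v)"
    define v1 where "v1 = central_index A1"
    show ?case
    proof (cases "v1 \<le> v\<^sup>2")
      case True
      then show ?thesis
        unfolding v1_def A1_def v_def by blast
    next
      case False
      have "2 \<le> v" "0 < real v"
        using less.prems(3) unfolding v_def by auto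
      have "v * 2 \<le> v\<^sup>2"
        using \<open>2 \<le> v\<close> by (simp add: power2_eq_square)
      then have "2 * v \<le> v1" "v < v1"
        using False \<open>2 \<le> v\<close> by auto
      have "1 \<le> 1 + 1 / real v"
        by simp
      then have "0 < A1" "A \<le> A1"
        unfolding A1_def using less.prems(2) mult_left_mono[of 1 "1 + 1 / real v" A]
        by (auto intro!: mult_pos_pos add_pos_nonneg)
      have A1B: "A1 * exp (2 / v1) \<le> B"
        using exp_radius_step[OF less.prems(2) _ \<open>2 * v \<le> v1\<close>] \<open>0 < real v\<close> less.prems(4)
        unfolding A1_def v_def by simp
      then have "v1 \<le> central_index B"
        unfolding v1_def using \<open>0 < A1\<close> \<open>0 < real v\<close>
        by (intro central_index_mono) (auto intro: order_trans[OF _ A1B])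
      then have "central_index B - v1 < d"
        using \<open>v < v1\<close> less.prems(1) unfolding v_def by linarith
      moreover have "2 \<le> central_index A1"
        using \<open>2 * v \<le> v1\<close> \<open>2 \<le> v\<close> unfolding v1_def by linarith
      ultimately obtain A' where "A1 \<le> A'" "v1 \<le> central_index A'"
        "central_index (A' * (1 + 1 / central_index A')) \<le> (central_index A')\<^sup>2"
        using less.IH[OF _ refl \<open>0 < A1\<close> _ A1B[unfolded v1_def]] unfolding v1_def by blast
      then show ?thesis
        using \<open>A \<le> A1\<close> \<open>v < v1\<close> unfolding v_def by (meson order_trans less_imp_le)
    qed
  qed
  then show ?thesis
    using assms that unfolding B_def by blast
qed

lemma suminf_le_central_term:
  assumes A: "0 < A" and k: "k = central_index A" "0 < k"
    and regular: "central_index (A * (1 + 1 / k)) \<le> k\<^sup>2"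
  shows "(\<Sum>j. b j * A ^ j) \<le> b k * A ^ k * (exp k * (real k + 1))"
proof -
  define \<rho> where "\<rho> = 1 + 1 / real k"
  define k' where "k' = central_index (\<rho> * A)"
  have "1 < \<rho>"
    using k by (simp add: \<rho>_def)
  have "0 < \<rho> * A"
    using A \<open>1 < \<rho>\<close> by simp
  have term_le: "b j * A ^ j \<le> b k' * (\<rho> * A) ^ k' * (1 / \<rho>) ^ j" for j
  proof -
    have "b j * A ^ j = b j * (\<rho> * A) ^ j * (1 / \<rho>) ^ j"
      using \<open>1 < \<rho>\<close> by (simp add: power_mult_distrib power_divide field_simps)
    also have "\<dots> \<le> b k' * (\<rho> * A) ^ k' * (1 / \<rho>) ^ j"
      unfolding k'_def using \<open>0 < \<rho> * A\<close> \<open>1 < \<rho>\<close> by (intro mult_right_mono central_index_max) auto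
    finally show ?thesis .
  qed
  have "b k' * (\<rho> * A) ^ k' = b k' * A ^ k' * \<rho> ^ k'"
    by (simp add: power_mult_distrib)
  also have "\<dots> \<le> b k * A ^ k * \<rho> ^ k'"
    unfolding k using A \<open>1 < \<rho>\<close> by (intro mult_right_mono central_index_max) auto
  also have "\<dots> \<le> b k * A ^ k * \<rho> ^ (k\<^sup>2)"
    using regular A \<open>1 < \<rho>\<close> nonneg unfolding k'_def \<rho>_def
    by (intro mult_left_mono power_increasing) (auto simp: mult.commute)
  also have "\<rho> ^ (k\<^sup>2) \<le> exp k"
  proof -
    have "\<rho> ^ (k\<^sup>2) \<le> exp (1 / real k) ^ (k\<^sup>2)"
      unfolding \<rho>_def using \<open>1 < \<rho>\<close> by (intro power_mono) (auto simp: add.commute exp_ge_add_one_self)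
    also have "\<dots> = exp k"
      using k(2) by (simp add: exp_of_nat_mult[symmetric] power2_eq_square)
    finally show ?thesis .
  qed
  finally have top: "b k' * (\<rho> * A) ^ k' \<le> b k * A ^ k * exp k"
    using A nonneg by (simp add: mult_left_mono)
  have geometric: "(\<lambda>j. (1 / \<rho>) ^ j) sums (real k + 1)"
    using geometric_sums[of "1 / \<rho>"] \<open>1 < \<rho>\<close> k(2) by (simp add: \<rho>_def field_simps)
  have "(\<Sum>j. b j * A ^ j) \<le> (\<Sum>j. b k' * (\<rho> * A) ^ k' * (1 / \<rho>) ^ j)"
    using summable[OF A] geometric
    by (intro suminf_le term_le summable_mult) (auto simp: sums_iff)
  also have "\<dots> = b k' * (\<rho> * A) ^ k' * (real k + 1)"
    using geometric by (simp add: sums_iff suminf_mult)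
  also have "\<dots> \<le> b k * A ^ k * exp k * (real k + 1)"
    using top by (intro mult_right_mono) auto
  finally show ?thesis
    by (simp add: mult.assoc)
qed

lemma term_not_dominated_by_tail:
  assumes "1 \<le> C"
    and dominated: "\<And>n A. n0 \<le> n \<Longrightarrow> A0 \<le> A \<Longrightarrow>
      b (Suc n) * A ^ (2 * n) \<le> C ^ Suc n * (\<Sum>j. if n < j then b j * A ^ j else 0)"
  shows False
proof -
  define D where "D = 6 * C"
  obtain A1 where A1: "max A0 (D ^ 3) \<le> A1" "1 \<le> A1" "max (Suc n0) 4 \<le> central_index A1"
    using central_index_unbounded by metis
  then have "0 < A1" "2 \<le> central_index A1"
    by auto
  then obtain A where A: "A1 \<le> A" "central_index A1 \<le> central_index A"
    "central_index (A * (1 + 1 / central_index A)) \<le> (central_index A)\<^sup>2"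
    by (rule central_index_regular)
  define k where "k = central_index A"
  have "0 < A" "A0 \<le> A" "D ^ 3 \<le> A" "Suc n0 \<le> k" "4 \<le> k"
    using A A1 unfolding k_def by auto
  have "0 < b k"
    unfolding k_def using \<open>0 < A\<close> by (rule central_index_pos)
  have "b k * A ^ (2 * (k - 1)) \<le> C ^ k * (\<Sum>j. if k - 1 < j then b j * A ^ j else 0)"
    using dominated[of "k - 1" A] \<open>Suc n0 \<le> k\<close> \<open>A0 \<le> A\<close> by simp
  also have "\<dots> \<le> C ^ k * (\<Sum>j. b j * A ^ j)"
    using summable[OF \<open>0 < A\<close>] nonneg \<open>0 < A\<close> \<open>1 \<le> C\<close>
    by (intro mult_left_mono suminf_le summable_comparison_test'[OF summable[OF \<open>0 < A\<close>], of 0]) auto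
  also have "\<dots> \<le> C ^ k * (b k * A ^ k * (exp k * (real k + 1)))"
    using A(3) \<open>0 < A\<close> \<open>4 \<le> k\<close> \<open>1 \<le> C\<close> unfolding k_def
    by (intro mult_left_mono suminf_le_central_term) auto
  also have "\<dots> \<le> C ^ k * (b k * A ^ k * 6 ^ k)"
    using exp_times_Suc_le[of k] \<open>0 < b k\<close> \<open>0 < A\<close> \<open>1 \<le> C\<close> by (intro mult_left_mono) auto
  also have "\<dots> = b k * A ^ k * D ^ k"
    unfolding D_def by (simp add: power_mult_distrib)
  finally have "b k * A ^ (2 * (k - 1)) \<le> b k * A ^ k * D ^ k" .
  moreover have "2 * (k - 1) = k + (k - 2)"
    using \<open>4 \<le> k\<close> by simp
  ultimately have "b k * A ^ k * A ^ (k - 2) \<le> b k * A ^ k * D ^ k"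
    by (metis power_add mult.assoc)
  then have "A ^ (k - 2) \<le> D ^ k"
    using \<open>0 < b k\<close> \<open>0 < A\<close> by simp
  moreover have "D ^ k < D ^ (3 * (k - 2))"
    using \<open>1 \<le> C\<close> \<open>4 \<le> k\<close> unfolding D_def by (intro power_strict_increasing) auto
  moreover have "D ^ (3 * (k - 2)) \<le> A ^ (k - 2)"
    using \<open>D ^ 3 \<le> A\<close> \<open>1 \<le> C\<close> unfolding power_mult D_def by (intro power_mono) auto
  ultimately show False
    by simp
qed

end

section \<open>Polynomiality\<close>

lemma zero_count_cong:
  assumes "open S" "K \<subseteq> S" "\<And>z. z \<in> S \<Longrightarrow> f z = g z"
  shows "zero_count f K = zero_count g K"
proof -
  have zeros: "{z \<in> K. f z = 0} = {z \<in> K. g z = 0}"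
    using assms(2,3) by auto
  have "zorder f z = zorder g z" if "z \<in> K" for z
  proof (rule zorder_cong[OF _ refl])
    have "z \<in> S"
      using that assms(2) by auto
    show "\<forall>\<^sub>F w in at z. f w = g w"
      using eventually_at_in_open'[OF assms(1) \<open>z \<in> S\<close>] by eventually_elim (use assms(3) in auto)
  qed
  then show ?thesis
    unfolding zero_count_def zeros by (auto intro!: sum.cong)
qed

lemma blaschke_bound_scaled_pow_le:
  assumes "0 < r" "8 \<le> A"
  shows "A ^ n * blaschke_bound r (r * A) ^ (3 * n) * A ^ (2 * n) \<le> 8 ^ n"
proof -
  define q where "q = blaschke_bound r (r * A)"
  have "0 \<le> q"
    unfolding q_def using assms by (simp add: blaschke_bound_nonneg)
  have "q * A \<le> 2"
    unfolding q_def using blaschke_bound_le[of r "r * A"] assms by (simp add: field_simps)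
  have "A ^ n * q ^ (3 * n) * A ^ (2 * n) = ((q * A) ^ 3) ^ n"
    by (simp add: power_mult power_mult_distrib power2_eq_square power3_eq_cube mult_ac)
  also have "\<dots> \<le> 8 ^ n"
    using \<open>q * A \<le> 2\<close> \<open>0 \<le> q\<close> assms power_mono[of "q * A" 2 3] by (intro power_mono) auto
  finally show ?thesis
    unfolding q_def .
qed

lemma blaschke_bound_scaled_pow_le_eighth_pow:
  assumes "0 < r" "8 \<le> A"
  shows "A ^ n * blaschke_bound r (r * A) ^ (3 * n) \<le> (1 / 8) ^ n"
proof -
  define X where "X = A ^ n * blaschke_bound r (r * A) ^ (3 * n)"
  have "0 \<le> X"
    unfolding X_def using assms by (simp add: blaschke_bound_nonneg)
  have "64 \<le> A\<^sup>2"
    using assms mult_mono[of 8 A 8 A] by (simp add: power2_eq_square)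
  then have "64 ^ n \<le> A ^ (2 * n)"
    unfolding power_mult by (intro power_mono) auto
  then have "X * 64 ^ n \<le> (1 / 8) ^ n * 64 ^ n"
    using blaschke_bound_scaled_pow_le[OF assms, of n] mult_left_mono[OF _ \<open>0 \<le> X\<close>]
    unfolding X_def[symmetric] by (simp flip: power_mult_distrib) (smt (verit))
  then show ?thesis
    unfolding X_def by simp
qed

lemma taylor_coeff_Suc_dominated_by_tail:
  fixes F :: "complex \<Rightarrow> complex" and p :: "complex poly"
  assumes holo: "F holomorphic_on ball 0 \<rho>" and r: "0 < r" "r * A < \<rho>" and A: "8 \<le> A"
    and n: "1 \<le> n" and p: "degree p \<le> n" "enat (3 * n) \<le> zero_count (\<lambda>z. F z - poly p z) (cball 0 r)"
  shows "norm (taylor_coeff F (Suc n)) * r ^ Suc n * A ^ (2 * n) \<le> 16 ^ Suc n * taylor_tail F n (r * A)"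
proof -
  define X where "X = A ^ n * blaschke_bound r (r * A) ^ (3 * n)"
  define T where "T = taylor_tail F n (r * A)"
  have rR: "0 < r" "r < r * A" "r * A < \<rho>"
    using r A by auto
  have "0 \<le> T"
    unfolding T_def using rR by (intro taylor_tail_nonneg[OF holo]) auto
  have "(real n + 1) * X \<le> (real n + 1) * (1 / 8) ^ n"
    unfolding X_def using blaschke_bound_scaled_pow_le_eighth_pow[OF r(1) A] by (intro mult_left_mono) auto
  also have "\<dots> \<le> (1 / 4) ^ n"
    using Suc_times_power_le[of "1 / 8" n] by simp
  also have "\<dots> \<le> (1 / 4) ^ 1"
    using n by (intro power_decreasing) auto
  finally have small: "(real n + 1) * (r * A / r) ^ n * blaschke_bound r (r * A) ^ (3 * n) \<le> 1 / 2"
    using r unfolding X_def by (simp add: mult.assoc)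
  have "norm (taylor_coeff F (Suc n)) * r ^ Suc n \<le> 4 * ((real n + 1) * X) * T"
    using norm_taylor_coeff_le_taylor_tail[OF holo rR p small lessI] r
    unfolding X_def T_def by (simp add: mult.assoc)
  then have "norm (taylor_coeff F (Suc n)) * r ^ Suc n * A ^ (2 * n)
      \<le> 4 * (real n + 1) * (X * A ^ (2 * n)) * T"
    using mult_right_mono[of _ _ "A ^ (2 * n)"] A by (simp add: mult_ac)
  also have "\<dots> \<le> 4 * ((real n + 1) * 8 ^ n) * T"
    using mult_left_mono[OF mult_right_mono[OF blaschke_bound_scaled_pow_le[OF r(1) A, of n] \<open>0 \<le> T\<close>],
        of "4 * (real n + 1)"]
    unfolding X_def by (simp only: mult.assoc) simp
  also have "\<dots> \<le> 16 ^ Suc n * T"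
  proof (rule mult_right_mono)
    have "(real n + 1) * 8 ^ n \<le> 16 ^ n" "(16::real) ^ Suc n = 16 * 16 ^ n" "(0::real) \<le> 16 ^ n"
      using Suc_times_power_le[of 8 n] by simp_all
    then show "4 * ((real n + 1) * 8 ^ n) \<le> 16 ^ Suc n"
      by linarith
  qed fact
  finally show ?thesis
    unfolding T_def .
qed

lemma holomorphic_extension_if_summable_taylor_coeff:
  assumes holo: "f holomorphic_on ball 0 1"
    and summable: "\<And>B. 0 < B \<Longrightarrow> summable (\<lambda>j. norm (taylor_coeff f j) * B ^ j)"
  obtains F where "\<And>\<rho>. F holomorphic_on ball 0 \<rho>" "\<And>w. w \<in> ball 0 1 \<Longrightarrow> F w = f w"
    "taylor_coeff F = taylor_coeff f"
proof -
  define F where "F w = (\<Sum>j. taylor_coeff f j * w ^ j)" for w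
  have F_sums: "(\<lambda>j. taylor_coeff f j * w ^ j) sums F w" for w
  proof -
    have "0 < norm w + 1"
      by (intro add_nonneg_pos) auto
    have "norm (taylor_coeff f j * w ^ j) \<le> norm (taylor_coeff f j) * (norm w + 1) ^ j" for j
      unfolding norm_mult norm_power by (intro mult_left_mono power_mono) auto
    then have "summable (\<lambda>j. norm (taylor_coeff f j * w ^ j))"
      by (intro summable_comparison_test'[OF summable[OF \<open>0 < norm w + 1\<close>], of 0]) simp
    then show ?thesis
      unfolding F_def by (rule summable_sums[OF summable_norm_cancel])
  qed
  have "F holomorphic_on ball 0 \<rho>" for \<rho>
    using F_sums by (intro power_series_holomorphic[where a = "taylor_coeff f"]) simp
  moreover have F_eq: "F w = f w" if "w \<in> ball 0 1" for w
    using F_sums taylor_coeff_sums[OF holo that] by (rule sums_unique2)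
  moreover have "eventually (\<lambda>w. F w = f w) (nhds 0)"
    using F_eq eventually_nhds_in_open[of "ball 0 1" 0] by (auto elim!: eventually_mono)
  then have "taylor_coeff F = taylor_coeff f"
    by (rule taylor_coeff_cong)
  ultimately show ?thesis
    using that by blast
qed

lemma taylor_coeff_eventually_zero_if_superlinear_zeros:
  assumes holo: "f holomorphic_on ball 0 1" and r: "0 < r" "r < 1"
    and zeros: "superlinear_zeros f (cball 0 r)"
  shows "\<forall>\<^sub>F j in sequentially. taylor_coeff f j = 0"
proof (rule ccontr)
  assume "\<not> (\<forall>\<^sub>F j in sequentially. taylor_coeff f j = 0)"
  then have frequent: "\<exists>j\<ge>m. taylor_coeff f j \<noteq> 0" for m
    unfolding not_eventually frequently_sequentially by blast
  have summable: "summable (\<lambda>j. norm (taylor_coeff f j) * B ^ j)" if "0 < B" for B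
    using summable_taylor_coeff_if_superlinear_zeros[OF holo r zeros that] .
  then obtain F where F: "\<And>\<rho>. F holomorphic_on ball 0 \<rho>" "\<And>w. w \<in> ball 0 1 \<Longrightarrow> F w = f w"
    "taylor_coeff F = taylor_coeff f"
    using holomorphic_extension_if_summable_taylor_coeff[OF holo] by blast
  define b where "b j = norm (taylor_coeff f j) * r ^ j" for j
  interpret maximal_term b
  proof
    show "0 \<le> b j" for j
      unfolding b_def using r by simp
    show "summable (\<lambda>j. b j * A ^ j)" if "0 < A" for A
      using summable[of "r * A"] that r unfolding b_def by (simp add: power_mult_distrib mult.assoc)
    show "\<exists>j\<ge>m. 0 < b j" for m
      using frequent[of m] r unfolding b_def by auto
  qed
  obtain n0 where n0: "\<And>n. n0 \<le> n \<Longrightarrow>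
      \<exists>p. degree p \<le> n \<and> enat (3 * n) \<le> zero_count (\<lambda>z. f z - poly p z) (cball 0 r)"
    using spec[OF zeros[unfolded superlinear_zeros_def], of 3] unfolding eventually_sequentially by blast
  show False
  proof (rule term_not_dominated_by_tail[of 16 "max n0 1" 8])
    fix n :: nat and A :: real
    assume "max n0 1 \<le> n" "8 \<le> A"
    then obtain p where p: "degree p \<le> n" "enat (3 * n) \<le> zero_count (\<lambda>z. f z - poly p z) (cball 0 r)"
      using n0 by auto
    have "zero_count (\<lambda>z. F z - poly p z) (cball 0 r) = zero_count (\<lambda>z. f z - poly p z) (cball 0 r)"
      using F(2) r by (intro zero_count_cong[of "ball 0 1"]) auto
    then have "norm (taylor_coeff F (Suc n)) * r ^ Suc n * A ^ (2 * n) \<le> 16 ^ Suc n * taylor_tail F n (r * A)"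
      using p \<open>max n0 1 \<le> n\<close> \<open>8 \<le> A\<close> r
      by (intro taylor_coeff_Suc_dominated_by_tail[OF F(1)[of "r * A + 1"]]) auto
    moreover have "taylor_tail F n (r * A) = (\<Sum>j. if n < j then b j * A ^ j else 0)"
      unfolding taylor_tail_def F(3) b_def by (simp only: power_mult_distrib mult.assoc)
    ultimately show "b (Suc n) * A ^ (2 * n) \<le> 16 ^ Suc n * (\<Sum>j. if n < j then b j * A ^ j else 0)"
      unfolding F(3) b_def by simp
  qed simp
qed

lemma eq_poly_taylor_poly:
  assumes "f holomorphic_on ball 0 \<rho>" "\<And>j. m < j \<Longrightarrow> taylor_coeff f j = 0" "z \<in> ball 0 \<rho>"
  shows "f z = poly (taylor_poly f m) z"
proof -
  have "(\<lambda>j. if m < j then norm (taylor_coeff f j) * norm z ^ j else 0) = (\<lambda>j. 0)"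
    using assms(2) by auto
  then have "taylor_tail f m (norm z) = 0"
    unfolding taylor_tail_def by simp
  moreover have "norm (f z - poly (taylor_poly f m) z) \<le> taylor_tail f m (norm z)"
    using assms(1,3) by (intro norm_diff_taylor_poly_le) auto
  ultimately show ?thesis
    by simp
qed

theorem theorem1p1:
  fixes f :: "complex \<Rightarrow> complex" and r :: real
  assumes "f holomorphic_on ball 0 1"
    and "0 < r" and "r < 1"
    and "((\<lambda>n. ereal_of_enat (N_K f (cball 0 r) n) / ereal (real n)) \<longlongrightarrow> (\<infinity>::ereal)) sequentially"
  shows "\<exists>p :: complex poly. \<forall>z \<in> ball 0 1. f z = poly p z"
proof -
  have "superlinear_zeros f (cball 0 r)"
    using assms(4) by (rule superlinear_zeros_if_tendsto_PInfty)
  then have "\<forall>\<^sub>F j in sequentially. taylor_coeff f j = 0"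
    using assms(1-3) by (intro taylor_coeff_eventually_zero_if_superlinear_zeros)
  then obtain m where "\<And>j. m \<le> j \<Longrightarrow> taylor_coeff f j = 0"
    unfolding eventually_sequentially by blast
  then have "\<And>j. m < j \<Longrightarrow> taylor_coeff f j = 0"
    by simp
  then show ?thesis
    using eq_poly_taylor_poly[OF assms(1)] by blast
qed

end
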